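(* Let $H$ be an undirected graph with $n$ vertices and let $G_{\mathrm{sub}}$ be a graph obtained from $H$ by subdividing each edge at most once. Then $\mathrm{dtw}(G_{\mathrm{sub}})\le\lceil n/2\rceil$, i.e., every acyclic orientation of $G_{\mathrm{sub}}$ has DAG treewidth at most $\lceil n/2\rceil$.
   Context: Subdividing an edge $\{u,v\}$ replaces it by a new vertex $w$ and edges $\{u,w\},\{w,v\}$. For a DAG $\vec H$, a source is a vertex of in-degree $0$; $S$ denotes the set of sources; $R(s)$ is the set of vertices reachable from $s$, and $R(B)=\bigcup_{s\in B}R(s)$. A DAG tree decomposition of $\vec H$ is a tree $T$ whose nodes (bags) are subsets of $S$ such that every source lies in some bag and, for any bags $B,B_1,B_2$ with $B$ on the path between $B_1$ and $B_2$ in $T$, $R(B_1)\cap R(B_2)\subseteq R(B)$; its width is the maximum bag size and $\mathrm{dtw}(\vec H)$ is the minimum width. For an undirected graph, $\mathrm{dtw}$ is the maximum of $\mathrm{dtw}(\vec H)$ over all its acyclic orientations $\vec H$. *)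

theory Defs
  imports Complex_Main
begin

definition simple_graph :: "'a set \<Rightarrow> 'a set set \<Rightarrow> bool" where
  "simple_graph V E \<longleftrightarrow> finite V \<and>
     (\<forall>e\<in>E. \<exists>u v. u \<in> V \<and> v \<in> V \<and> u \<noteq> v \<and> e = {u, v})"

text \<open>Subdividing exactly the edges in F (a subset of E) once each; the new vertex
  on edge e is Inr e, original vertices are Inl v.\<close>
definition subdivide ::
  "'a set \<Rightarrow> 'a set set \<Rightarrow> 'a set set \<Rightarrow> ('a + 'a set) set \<times> ('a + 'a set) set set" where
  "subdivide V E F =
     (Inl ` V \<union> Inr ` F,
      {{Inl u, Inl v} | u v. {u, v} \<in> E - F} \<union> {{Inl u, Inr e} | u e. e \<in> F \<and> u \<in> e})"

definition acyclic_orientation :: "'v set \<Rightarrow> 'v set set \<Rightarrow> ('v \<times> 'v) set \<Rightarrow> bool" where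
  "acyclic_orientation V E A \<longleftrightarrow> A \<subseteq> V \<times> V \<and>
     (\<forall>u v. (u, v) \<in> A \<longrightarrow> {u, v} \<in> E) \<and>
     (\<forall>u v. {u, v} \<in> E \<longrightarrow> (u, v) \<in> A \<or> (v, u) \<in> A) \<and>
     acyclic A"

definition sources :: "'v set \<Rightarrow> ('v \<times> 'v) set \<Rightarrow> 'v set" where
  "sources V A = {v \<in> V. \<not> (\<exists>u. (u, v) \<in> A)}"

definition reach :: "('v \<times> 'v) set \<Rightarrow> 'v \<Rightarrow> 'v set" where
  "reach A s = {v. (s, v) \<in> A\<^sup>*}"

definition reachB :: "('v \<times> 'v) set \<Rightarrow> 'v set \<Rightarrow> 'v set" where
  "reachB A B = (\<Union>s\<in>B. reach A s)"

definition tpath :: "nat set set \<Rightarrow> nat list \<Rightarrow> nat \<Rightarrow> nat \<Rightarrow> bool" where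
  "tpath TE p a b \<longleftrightarrow> p \<noteq> [] \<and> hd p = a \<and> last p = b \<and> distinct p \<and>
     (\<forall>i < length p - 1. {p ! i, p ! Suc i} \<in> TE)"

definition is_tree :: "nat set \<Rightarrow> nat set set \<Rightarrow> bool" where
  "is_tree N TE \<longleftrightarrow> finite N \<and> N \<noteq> {} \<and>
     (\<forall>e\<in>TE. \<exists>a b. a \<in> N \<and> b \<in> N \<and> a \<noteq> b \<and> e = {a, b}) \<and>
     (\<forall>a\<in>N. \<forall>b\<in>N. \<exists>!p. tpath TE p a b)"

definition on_path :: "nat set set \<Rightarrow> nat \<Rightarrow> nat \<Rightarrow> nat \<Rightarrow> bool" where
  "on_path TE t a b \<longleftrightarrow> (\<exists>p. tpath TE p a b \<and> t \<in> set p)"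

definition dag_tree_decomp ::
  "'v set \<Rightarrow> ('v \<times> 'v) set \<Rightarrow> nat set \<Rightarrow> nat set set \<Rightarrow> (nat \<Rightarrow> 'v set) \<Rightarrow> bool" where
  "dag_tree_decomp V A N TE bag \<longleftrightarrow> is_tree N TE \<and>
     (\<forall>t\<in>N. bag t \<subseteq> sources V A) \<and>
     (\<forall>s\<in>sources V A. \<exists>t\<in>N. s \<in> bag t) \<and>
     (\<forall>t\<in>N. \<forall>t1\<in>N. \<forall>t2\<in>N. on_path TE t t1 t2 \<longrightarrow>
        reachB A (bag t1) \<inter> reachB A (bag t2) \<subseteq> reachB A (bag t))"

definition td_width :: "nat set \<Rightarrow> (nat \<Rightarrow> 'v set) \<Rightarrow> nat" where
  "td_width N bag = Max ((\<lambda>t. card (bag t)) ` N)"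

definition dtw_dag :: "'v set \<Rightarrow> ('v \<times> 'v) set \<Rightarrow> nat" where
  "dtw_dag V A = Inf {td_width N bag | N TE bag. dag_tree_decomp V A N TE bag}"

definition dtw_graph :: "'v set \<Rightarrow> 'v set set \<Rightarrow> nat" where
  "dtw_graph V E = Sup {dtw_dag V A | A. acyclic_orientation V E A}"

end

theory Submission
  imports Defs
begin

(*
  Fix an acyclic orientation A of the subdivided graph. Choose a maximal family M of pairwise
  disjoint subdivided edges whose subdivision vertices are sources, and let U be the original
  vertices not covered by M, so that n = |U| + 2|M|. Pick for every vertex of U a source reaching
  it, split these at most |U| sources into halves C1 and C2, and let P and Q consist of the
  subdivision vertices of M together with C1, respectively C2.

  A source subdivision vertex has arcs to both endpoints of its edge, so an original vertex that
  is a source is not covered by M and is therefore its own chosen source. Every other source is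
  the subdivision vertex of an edge that meets a vertex covered by M (by maximality) and whose
  other endpoint is reached from C1 or from C2; so everything it reaches besides itself is
  reached from P or from Q. The edge PQ, with every remaining source attached as a leaf to a bag
  dominating it, is then a DAG tree decomposition of width at most |M| + ceil(|U|/2) = ceil(n/2).
*)

section \<open>Paths in trees\<close>

lemma tpath_iff_successively:
  "tpath TE p a b \<longleftrightarrow>
     p \<noteq> [] \<and> hd p = a \<and> last p = b \<and> distinct p \<and> successively (\<lambda>x y. {x, y} \<in> TE) p"
  unfolding tpath_def successively_conv_nth by (simp add: less_diff_conv)

lemma tpath_rev: "tpath TE p a b \<Longrightarrow> tpath TE (rev p) b a"
  by (simp add: tpath_iff_successively hd_rev last_rev insert_commute)

lemma tpath_mono: "tpath TE p a b \<Longrightarrow> TE \<subseteq> TE' \<Longrightarrow> tpath TE' p a b"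
  by (auto simp: tpath_iff_successively elim: successively_mono)

lemma tpath_same_iff: "tpath TE p a a \<longleftrightarrow> p = [a]"
proof
  assume p: "tpath TE p a a"
  then have "distinct p" "hd p = last p" "p \<noteq> []" by (auto simp: tpath_iff_successively)
  then show "p = [a]"
    using p by (cases p) (auto simp: tpath_def split: if_splits)
qed (simp add: tpath_def)

lemma on_path_sym: "on_path TE t a b \<Longrightarrow> on_path TE t b a"
  unfolding on_path_def using tpath_rev by fastforce

lemma is_tree_edge: "is_tree N TE \<Longrightarrow> e \<in> TE \<Longrightarrow> \<exists>u v. u \<in> N \<and> v \<in> N \<and> u \<noteq> v \<and> e = {u, v}"
  unfolding is_tree_def by simp

lemma is_tree_edges_subset: "is_tree N TE \<Longrightarrow> \<Union>TE \<subseteq> N"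
  unfolding is_tree_def by fastforce

lemma tpath_subset_nodes:
  assumes "is_tree N TE" "tpath TE p a b" "a \<in> N"
  shows "set p \<subseteq> N"
proof
  fix x assume "x \<in> set p"
  then obtain i where i: "i < length p" "x = p ! i" by (metis in_set_conv_nth)
  show "x \<in> N"
  proof (cases i)
    case 0
    then show ?thesis using assms(2,3) i by (auto simp: tpath_def hd_conv_nth[symmetric])
  next
    case (Suc j)
    then have "{p ! j, x} \<in> TE" using assms(2) i by (simp add: tpath_def)
    then show ?thesis using is_tree_edges_subset[OF assms(1)] by blast
  qed
qed

lemma tree_path_ex1: "is_tree N TE \<Longrightarrow> a \<in> N \<Longrightarrow> b \<in> N \<Longrightarrow> \<exists>!p. tpath TE p a b"
  unfolding is_tree_def by blast

lemma tree_path_unique: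
  "is_tree N TE \<Longrightarrow> a \<in> N \<Longrightarrow> b \<in> N \<Longrightarrow> tpath TE p a b \<Longrightarrow> tpath TE q a b \<Longrightarrow> p = q"
  unfolding is_tree_def by blast

lemma tree_path_exists: "is_tree N TE \<Longrightarrow> a \<in> N \<Longrightarrow> b \<in> N \<Longrightarrow> \<exists>p. tpath TE p a b"
  unfolding is_tree_def by blast

lemma is_tree_singleton: "is_tree {t} {}"
  unfolding is_tree_def by (simp add: tpath_same_iff)

lemma tpath_insert_edge_avoiding:
  "tpath (insert {m, a} TE) p x y \<Longrightarrow> m \<notin> set p \<Longrightarrow> tpath TE p x y"
  by (auto simp: tpath_iff_successively doubleton_eq_iff elim!: successively_mono)

lemma leaf_on_tpath_is_end:
  assumes p: "tpath (insert {m, a} TE) p x y" and "m \<in> set p" and m: "m \<notin> \<Union>TE"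
  shows "m = x \<or> m = y"
proof (rule ccontr)
  assume interior: "\<not> (m = x \<or> m = y)"
  obtain i where i: "i < length p" "p ! i = m" by (meson \<open>m \<in> set p\<close> in_set_conv_nth)
  moreover have "p \<noteq> []" "hd p = x" "last p = y"
    using p by (auto simp: tpath_def)
  ultimately have "i \<noteq> 0" "i \<noteq> length p - 1"
    using interior by (metis hd_conv_nth, metis last_conv_nth)
  with i have "0 < i" "Suc i < length p" by auto
  have neighbour: "u = a" if "{u, m} \<in> insert {m, a} TE" "u \<noteq> m" for u
    using that m by (auto simp: doubleton_eq_iff)
  have edge: "{p ! j, p ! Suc j} \<in> insert {m, a} TE" if "Suc j < length p" for j
    using p that by (simp add: tpath_def)
  have "{p ! (i - 1), m} \<in> insert {m, a} TE" "{m, p ! Suc i} \<in> insert {m, a} TE"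
    using edge[of "i - 1"] edge[of i] i \<open>0 < i\<close> \<open>Suc i < length p\<close> by simp_all
  moreover have "p ! (i - 1) \<noteq> m" "p ! Suc i \<noteq> m"
    using p i \<open>0 < i\<close> \<open>Suc i < length p\<close> by (auto simp: tpath_def nth_eq_iff_index_eq)
  ultimately have "p ! (i - 1) = p ! Suc i"
    using neighbour by (metis insert_commute)
  then show False
    using p \<open>Suc i < length p\<close> by (auto simp: tpath_def nth_eq_iff_index_eq)
qed

lemma tpath_from_new_leaf_iff:
  assumes m: "m \<notin> \<Union>TE" and "m \<noteq> y"
  shows "tpath (insert {m, a} TE) p m y \<longleftrightarrow> (\<exists>p'. p = m # p' \<and> tpath TE p' a y \<and> m \<notin> set p')"
proof
  assume p: "tpath (insert {m, a} TE) p m y"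
  obtain p' where p': "p = m # p'"
    using p by (cases p) (auto simp: tpath_def)
  with p \<open>m \<noteq> y\<close> have "p' \<noteq> []"
    by (auto simp: tpath_def)
  have "m \<notin> set p'" "{m, hd p'} \<in> insert {m, a} TE" "hd p' \<noteq> m"
    using p p' \<open>p' \<noteq> []\<close> by (auto simp: tpath_iff_successively successively_Cons)
  then have "hd p' = a"
    using m by (auto simp: doubleton_eq_iff)
  with p p' \<open>p' \<noteq> []\<close> have "tpath (insert {m, a} TE) p' a y"
    by (auto simp: tpath_iff_successively successively_Cons)
  with \<open>m \<notin> set p'\<close> p' show "\<exists>p'. p = m # p' \<and> tpath TE p' a y \<and> m \<notin> set p'"
    using tpath_insert_edge_avoiding by blast
next
  assume "\<exists>p'. p = m # p' \<and> tpath TE p' a y \<and> m \<notin> set p'"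
  then obtain p' where p': "p = m # p'" "tpath TE p' a y" "m \<notin> set p'" by blast
  then obtain r where "p' = a # r"
    by (cases p') (auto simp: tpath_def)
  with p' show "tpath (insert {m, a} TE) p m y"
    by (auto simp: tpath_iff_successively elim!: successively_mono)
qed

lemma tpath_insert_leaf_old_ends:
  "tpath (insert {m, a} TE) p x y \<Longrightarrow> m \<notin> \<Union>TE \<Longrightarrow> x \<noteq> m \<Longrightarrow> y \<noteq> m \<Longrightarrow> tpath TE p x y"
  by (metis leaf_on_tpath_is_end tpath_insert_edge_avoiding)

lemma tpath_ex1_sym: "\<exists>!p. tpath TE p a b \<Longrightarrow> \<exists>!p. tpath TE p b a"
  by (metis rev_rev_ident tpath_rev)

lemma is_tree_insert_leaf:
  assumes t: "is_tree N TE" and m: "m \<notin> N" and a: "a \<in> N"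
  shows "is_tree (insert m N) (insert {m, a} TE)"
proof -
  let ?T = "insert {m, a} TE"
  have mTE: "m \<notin> \<Union>TE" using is_tree_edges_subset[OF t] m by blast
  have from_leaf: "\<exists>!p. tpath ?T p m z" if z: "z \<in> N" for z
  proof -
    have zm: "m \<noteq> z" using z m by blast
    obtain p where p: "tpath TE p a z" using tree_path_exists[OF t a z] by blast
    show ?thesis
    proof (rule ex1I)
      have "m \<notin> set p" using tpath_subset_nodes[OF t p a] m by blast
      then show "tpath ?T (m # p) m z" using tpath_from_new_leaf_iff[OF mTE zm] p by blast
    next
      fix q assume "tpath ?T q m z"
      then obtain q' where "q = m # q'" "tpath TE q' a z"
        using tpath_from_new_leaf_iff[OF mTE zm] by blast
      then show "q = m # p" using tree_path_unique[OF t a z _ p] by simp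
    qed
  qed
  have "\<exists>!p. tpath ?T p x y" if x: "x \<in> insert m N" and y: "y \<in> insert m N" for x y
  proof -
    consider "x = m" "y = m" | "x = m" "y \<in> N" | "x \<in> N" "y = m" | "x \<in> N" "y \<in> N"
      using x y by blast
    then show ?thesis
    proof cases
      case 1
      then show ?thesis by (simp add: tpath_same_iff)
    next
      case 2
      then show ?thesis using from_leaf by blast
    next
      case 3
      then show ?thesis using from_leaf tpath_ex1_sym by blast
    next
      case 4
      with m have "tpath ?T p x y \<longleftrightarrow> tpath TE p x y" for p
        using tpath_insert_leaf_old_ends[OF _ mTE] tpath_mono[of TE p x y ?T] by blast
      with 4 show ?thesis using tree_path_ex1[OF t] by simp
    qed
  qed
  moreover have "\<exists>u v. u \<in> insert m N \<and> v \<in> insert m N \<and> u \<noteq> v \<and> e = {u, v}" if "e \<in> ?T" for e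
  proof (cases "e = {m, a}")
    case False
    with that have "e \<in> TE" by simp
    then show ?thesis using is_tree_edge[OF t] by blast
  qed (use a m in blast)
  moreover have "finite (insert m N)" using t by (simp add: is_tree_def)
  ultimately show ?thesis unfolding is_tree_def by simp
qed

section \<open>Reachability\<close>

lemma reach_into_source: "s \<in> sources V A \<Longrightarrow> (x, s) \<in> A\<^sup>* \<Longrightarrow> x = s"
  unfolding sources_def by (auto elim: rtranclE)

lemma source_in_reachB_iff: "s \<in> sources V A \<Longrightarrow> s \<in> reachB A B \<longleftrightarrow> s \<in> B"
  unfolding reachB_def reach_def using reach_into_source by fastforce

lemma reach_subset_reachB: "x \<in> reachB A B \<Longrightarrow> reach A x \<subseteq> reachB A B"
  unfolding reachB_def reach_def by (auto intro: rtrancl_trans)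

lemma reachB_Un: "reachB A (B \<union> C) = reachB A B \<union> reachB A C"
  unfolding reachB_def by blast

lemma reachB_source_leaf:
  assumes "s \<in> sources V A" "s \<notin> C" "reach A s - {s} \<subseteq> reachB A B"
  shows "reachB A {s} \<inter> reachB A C \<subseteq> reachB A B"
  using assms source_in_reachB_iff[OF assms(1)] unfolding reachB_def by blast

lemma ex_source_reaching:
  assumes "wf A" "A \<subseteq> V \<times> V"
  shows "x \<in> V \<Longrightarrow> \<exists>s\<in>sources V A. (s, x) \<in> A\<^sup>*"
  using assms(1)
proof (induction x rule: wf_induct_rule)
  case (less x)
  show ?case
  proof (cases "\<exists>y. (y, x) \<in> A")
    case True
    then obtain y where y: "(y, x) \<in> A" by blast
    with assms(2) less.IH obtain s where "s \<in> sources V A" "(s, y) \<in> A\<^sup>*" by blast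
    with y show ?thesis by (meson rtrancl.rtrancl_into_rtrancl)
  next
    case False
    with less.prems show ?thesis unfolding sources_def by blast
  qed
qed

section \<open>DAG tree decompositions with two dominating bags\<close>

definition dtd_path_condition ::
  "('v \<times> 'v) set \<Rightarrow> nat set \<Rightarrow> nat set set \<Rightarrow> (nat \<Rightarrow> 'v set) \<Rightarrow> bool" where
  "dtd_path_condition A N TE bag \<longleftrightarrow> (\<forall>t\<in>N. \<forall>t1\<in>N. \<forall>t2\<in>N. on_path TE t t1 t2 \<longrightarrow>
     reachB A (bag t1) \<inter> reachB A (bag t2) \<subseteq> reachB A (bag t))"

lemma dtd_path_condition_singleton: "dtd_path_condition A {t} {} bag"
  unfolding dtd_path_condition_def on_path_def by (simp add: tpath_same_iff)

lemma dtd_path_condition_insert_leaf: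
  assumes t: "is_tree N TE" and m: "m \<notin> N" and a: "a \<in> N"
    and pc: "dtd_path_condition A N TE bag"
    and leaf: "\<And>t. t \<in> N \<Longrightarrow> reachB A B \<inter> reachB A (bag t) \<subseteq> reachB A (bag a)"
  shows "dtd_path_condition A (insert m N) (insert {m, a} TE) (bag(m := B))"
proof -
  let ?T = "insert {m, a} TE"
  let ?b = "bag(m := B)"
  have mTE: "m \<notin> \<Union>TE" using is_tree_edges_subset[OF t] m by blast
  have from_leaf: "reachB A (?b m) \<inter> reachB A (?b t2) \<subseteq> reachB A (?b t)"
    if t2: "t2 \<in> insert m N" and path: "on_path ?T t m t2" for t t2
  proof (cases "t = m")
    case False
    then have t2m: "m \<noteq> t2" using path by (auto simp: on_path_def tpath_same_iff)
    with path obtain p where "tpath TE p a t2" "t \<in> set p"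
      using False tpath_from_new_leaf_iff[OF mTE t2m] unfolding on_path_def by fastforce
    moreover have t2N: "t2 \<in> N" using t2 t2m by blast
    ultimately have "t \<in> N" "on_path TE t a t2"
      using tpath_subset_nodes[OF t _ a] unfolding on_path_def by blast+
    then have "reachB A (bag a) \<inter> reachB A (bag t2) \<subseteq> reachB A (bag t)"
      using pc a t2N unfolding dtd_path_condition_def by blast
    then show ?thesis using leaf[OF t2N] False t2m by auto
  qed simp
  show ?thesis
    unfolding dtd_path_condition_def
  proof (intro ballI impI)
    fix t t1 t2
    assume t: "t \<in> insert m N" and t1: "t1 \<in> insert m N" and t2: "t2 \<in> insert m N"
      and path: "on_path ?T t t1 t2"
    consider "t1 = m" | "t2 = m" | "t1 \<noteq> m" "t2 \<noteq> m" by blast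
    then show "reachB A (?b t1) \<inter> reachB A (?b t2) \<subseteq> reachB A (?b t)"
    proof cases
      case 1
      then show ?thesis using from_leaf[OF t2] path by simp
    next
      case 2
      then show ?thesis using from_leaf[OF t1] on_path_sym[OF path] by (simp add: Int_commute)
    next
      case 3
      with t1 t2 have t12: "t1 \<in> N" "t2 \<in> N" by auto
      from path obtain p where "tpath TE p t1 t2" "t \<in> set p"
        using tpath_insert_leaf_old_ends[OF _ mTE 3] unfolding on_path_def by blast
      then have "t \<in> N" "on_path TE t t1 t2"
        using tpath_subset_nodes[OF \<open>is_tree N TE\<close> _ t12(1)] unfolding on_path_def by blast+
      then show ?thesis
        using pc t12 3 m unfolding dtd_path_condition_def by auto
    qed
  qed
qed

lemma ex_double_star_decomp:
  assumes "finite X" "X \<subseteq> sources V A" "X \<inter> (P \<union> Q) = {}"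
    and "\<forall>x\<in>X. reach A x - {x} \<subseteq> reachB A P \<or> reach A x - {x} \<subseteq> reachB A Q"
  shows "\<exists>N TE bag. is_tree N TE \<and> dtd_path_condition A N TE bag \<and>
    (\<exists>t\<in>N. bag t = P) \<and> (\<exists>t\<in>N. bag t = Q) \<and>
    bag ` N \<subseteq> {P, Q} \<union> (\<lambda>x. {x}) ` X \<and> X \<subseteq> \<Union>(bag ` N)"
  using assms
proof (induction X rule: finite_induct)
  case empty
  let ?bag = "(\<lambda>_. P)(1 := Q)"
  have "is_tree (insert 1 {0}) (insert {1, 0} {})"
    by (rule is_tree_insert_leaf[OF is_tree_singleton]) simp_all
  moreover have "dtd_path_condition A (insert 1 {0}) (insert {1, 0} {}) ?bag"
    by (rule dtd_path_condition_insert_leaf[OF is_tree_singleton _ _ dtd_path_condition_singleton])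
      auto
  ultimately show ?case
    by (intro exI[of _ "insert 1 {0}"] exI[of _ "insert {1, 0} {}"] exI[of _ ?bag] conjI)
      (assumption+, auto)
next
  case (insert x X)
  have X: "X \<subseteq> sources V A" "X \<inter> (P \<union> Q) = {}"
    "\<forall>y\<in>X. reach A y - {y} \<subseteq> reachB A P \<or> reach A y - {y} \<subseteq> reachB A Q"
    using insert.prems by auto
  from insert.IH[OF X]
  obtain N TE bag where t: "is_tree N TE" and pc: "dtd_path_condition A N TE bag"
    and P: "\<exists>t\<in>N. bag t = P" and Q: "\<exists>t\<in>N. bag t = Q"
    and bags: "bag ` N \<subseteq> {P, Q} \<union> (\<lambda>x. {x}) ` X" and covers: "X \<subseteq> \<Union>(bag ` N)"
    by (elim exE conjE)
  have "finite N" using t by (simp add: is_tree_def)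
  then obtain m where m: "m \<notin> N"
    using ex_new_if_finite[OF infinite_UNIV_nat] by blast
  obtain tP tQ where "tP \<in> N" "bag tP = P" "tQ \<in> N" "bag tQ = Q"
    using P Q by blast
  with insert.prems(3) obtain a where a: "a \<in> N" and dominated: "reach A x - {x} \<subseteq> reachB A (bag a)"
    by auto
  have x: "x \<in> sources V A" "x \<notin> bag t" if "t \<in> N" for t
    using insert.hyps(2) insert.prems(1,2) bags that by auto
  have leaf: "reachB A {x} \<inter> reachB A (bag t) \<subseteq> reachB A (bag a)" if "t \<in> N" for t
    using reachB_source_leaf[OF x[OF that] dominated] .
  have "is_tree (insert m N) (insert {m, a} TE)"
    using is_tree_insert_leaf[OF t m a] .
  moreover have "dtd_path_condition A (insert m N) (insert {m, a} TE) (bag(m := {x}))"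
    using dtd_path_condition_insert_leaf[OF t m a pc leaf] .
  moreover have "\<exists>t\<in>insert m N. (bag(m := {x})) t = P" "\<exists>t\<in>insert m N. (bag(m := {x})) t = Q"
    using P Q m by (metis fun_upd_other insertCI)+
  moreover have "(bag(m := {x})) ` insert m N \<subseteq> {P, Q} \<union> (\<lambda>x. {x}) ` insert x X"
    using bags m by auto
  moreover have "insert x X \<subseteq> \<Union>((bag(m := {x})) ` insert m N)"
    using covers m by auto
  ultimately show ?case
    by (intro exI[of _ "insert m N"] exI[of _ "insert {m, a} TE"] exI[of _ "bag(m := {x})"] conjI)
      assumption+
qed

lemma dtw_dag_le_td_width: "dag_tree_decomp V A N TE bag \<Longrightarrow> dtw_dag V A \<le> td_width N bag"
  unfolding dtw_dag_def by (rule cInf_lower) auto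

lemma dtw_dag_le_if_dominating_bags:
  assumes "finite (sources V A)" "P \<subseteq> sources V A" "Q \<subseteq> sources V A" "card P \<le> w" "card Q \<le> w"
    and dominated: "\<And>s. s \<in> sources V A - (P \<union> Q) \<Longrightarrow>
      reach A s - {s} \<subseteq> reachB A P \<or> reach A s - {s} \<subseteq> reachB A Q"
    and w: "sources V A - (P \<union> Q) \<noteq> {} \<Longrightarrow> 1 \<le> w"
  shows "dtw_dag V A \<le> w"
proof -
  let ?X = "sources V A - (P \<union> Q)"
  have X: "finite ?X" "?X \<subseteq> sources V A" "?X \<inter> (P \<union> Q) = {}"
    "\<forall>s\<in>?X. reach A s - {s} \<subseteq> reachB A P \<or> reach A s - {s} \<subseteq> reachB A Q"
    using assms(1) dominated by auto
  obtain N TE bag where t: "is_tree N TE" and pc: "dtd_path_condition A N TE bag"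
    and P: "\<exists>t\<in>N. bag t = P" and Q: "\<exists>t\<in>N. bag t = Q"
    and bags: "bag ` N \<subseteq> {P, Q} \<union> (\<lambda>x. {x}) ` ?X" and covers: "?X \<subseteq> \<Union>(bag ` N)"
    using ex_double_star_decomp[OF X] by (elim exE conjE)
  have "finite N" "N \<noteq> {}" using t by (simp_all add: is_tree_def)
  have "\<forall>t\<in>N. bag t \<subseteq> sources V A"
    using bags assms(2,3) by auto
  moreover have "\<forall>s\<in>sources V A. \<exists>t\<in>N. s \<in> bag t"
  proof
    fix s assume "s \<in> sources V A"
    then consider "s \<in> P" | "s \<in> Q" | "s \<in> ?X" by blast
    then show "\<exists>t\<in>N. s \<in> bag t"
      by cases (use P Q covers in auto)
  qed
  ultimately have "dag_tree_decomp V A N TE bag"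
    using t pc unfolding dag_tree_decomp_def dtd_path_condition_def by (intro conjI) assumption+
  moreover have "card (bag t) \<le> w" if "t \<in> N" for t
  proof -
    have "bag t \<in> {P, Q} \<union> (\<lambda>x. {x}) ` ?X"
      using bags that by (rule subsetD[OF _ imageI])
    then consider "bag t = P" | "bag t = Q" | x where "x \<in> ?X" "bag t = {x}"
      by auto
    then show ?thesis
      by cases (use assms(4,5) w in auto)
  qed
  then have "td_width N bag \<le> w"
    unfolding td_width_def using \<open>finite N\<close> \<open>N \<noteq> {}\<close> by simp
  ultimately show ?thesis
    using dtw_dag_le_td_width order_trans by blast
qed

section \<open>Disjoint families and halving\<close>

lemma ex_maximal_pairwise_disjnt_subset:
  assumes "finite \<F>"
  shows "\<exists>M\<subseteq>\<F>. pairwise disjnt M \<and> (\<forall>e\<in>\<F> - M. \<exists>e'\<in>M. \<not> disjnt e e')"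
  using assms
proof (induction \<F> rule: finite_induct)
  case (insert e \<F>)
  then obtain M where M: "M \<subseteq> \<F>" "pairwise disjnt M" "\<forall>f\<in>\<F> - M. \<exists>e'\<in>M. \<not> disjnt f e'"
    by blast
  show ?case
  proof (cases "\<exists>e'\<in>M. \<not> disjnt e e'")
    case True
    with M show ?thesis by (intro exI[of _ M]) auto
  next
    case False
    with M show ?thesis
      by (intro exI[of _ "insert e M"]) (auto simp: pairwise_insert disjnt_sym)
  qed
qed simp

lemma card_Union_pairwise_disjnt_doubletons:
  assumes "pairwise disjnt M" "\<And>e. e \<in> M \<Longrightarrow> card e = 2"
  shows "card (\<Union>M) = 2 * card M"
proof -
  have "card (\<Union>M) = sum card M"
    using assms by (intro card_Union_disjoint) (auto intro: card_ge_0_finite)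
  also have "\<dots> = 2 * card M"
    using assms(2) by simp
  finally show ?thesis .
qed

lemma ex_subset_halves:
  assumes "finite X"
  shows "\<exists>Y\<subseteq>X. card Y \<le> (card X + 1) div 2 \<and> card (X - Y) \<le> (card X + 1) div 2"
proof -
  obtain Y where "Y \<subseteq> X" "card Y = card X div 2"
    using obtain_subset_with_card_n[of "card X div 2" X] by auto
  moreover have "card (X - Y) = card X - card X div 2"
    using calculation assms by (simp add: card_Diff_subset finite_subset)
  ultimately show ?thesis by (intro exI[of _ Y]) auto
qed

lemma nat_ceiling_half: "nat \<lceil>real n / 2\<rceil> = (n + 1) div 2"
proof -
  have "\<lceil>real n / 2\<rceil> = int ((n + 1) div 2)"
  proof (rule ceiling_unique)
    show "real_of_int (int ((n + 1) div 2)) - 1 < real n / 2"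
      "real n / 2 \<le> real_of_int (int ((n + 1) div 2))"
      by (cases "even n"; auto elim!: evenE oddE simp: field_simps)+
  qed
  then show ?thesis by simp
qed

section \<open>Acyclic orientations of subdivided graphs\<close>

lemma fst_subdivide: "fst (subdivide V E F) = Inl ` V \<union> Inr ` F"
  by (simp add: subdivide_def)

lemma snd_subdivide: "snd (subdivide V E F) =
    {{Inl u, Inl v} | u v. {u, v} \<in> E - F} \<union> {{Inl u, Inr e} | u e. e \<in> F \<and> u \<in> e}"
  by (simp add: subdivide_def)

locale subdivision_orientation =
  fixes V :: "'a set" and E F :: "'a set set" and A :: "(('a + 'a set) \<times> ('a + 'a set)) set"
  assumes simple: "simple_graph V E" and F_subset: "F \<subseteq> E"
    and orientation: "acyclic_orientation (fst (subdivide V E F)) (snd (subdivide V E F)) A"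
begin

abbreviation S :: "('a + 'a set) set" where
  "S \<equiv> sources (fst (subdivide V E F)) A"

lemma finite_V: "finite V"
  using simple by (simp add: simple_graph_def)

lemma edge_doubleton: "e \<in> E \<Longrightarrow> \<exists>u v. u \<in> V \<and> v \<in> V \<and> u \<noteq> v \<and> e = {u, v}"
  using simple by (simp add: simple_graph_def)

lemma finite_F: "finite F"
proof -
  have "F \<subseteq> Pow V" using F_subset edge_doubleton by blast
  then show ?thesis using finite_V finite_subset by blast
qed

lemma arcs_subset: "A \<subseteq> fst (subdivide V E F) \<times> fst (subdivide V E F)"
  using orientation by (simp add: acyclic_orientation_def)

lemma finite_vertices: "finite (fst (subdivide V E F))"
  using finite_V finite_F by (simp add: fst_subdivide)

lemma finite_S: "finite S"
  using finite_vertices by (simp add: sources_def)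

lemma wf_arcs: "wf A"
proof (rule finite_acyclic_wf)
  show "finite A"
    using arcs_subset by (rule finite_subset) (simp add: finite_vertices)
  show "acyclic A"
    using orientation by (simp add: acyclic_orientation_def)
qed

lemma source_reaches: "x \<in> fst (subdivide V E F) \<Longrightarrow> \<exists>s\<in>S. (s, x) \<in> A\<^sup>*"
  using ex_source_reaching[OF wf_arcs arcs_subset] .

lemma arc_from_source_subdivision_vertex:
  assumes "Inr e \<in> S" "u \<in> e"
  shows "(Inr e, Inl u) \<in> A"
proof -
  have "e \<in> F" using assms(1) by (auto simp: sources_def fst_subdivide)
  with assms(2) have "{Inl u, Inr e} \<in> snd (subdivide V E F)"
    by (auto simp: snd_subdivide)
  moreover have "(Inl u, Inr e) \<notin> A" using assms(1) by (simp add: sources_def)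
  ultimately show ?thesis
    using orientation unfolding acyclic_orientation_def by blast
qed

lemma reach_subdivision_vertex: "reach A (Inr e) - {Inr e} \<subseteq> (\<Union>u\<in>e. reach A (Inl u))"
proof
  fix y assume "y \<in> reach A (Inr e) - {Inr e}"
  then obtain z where z: "(Inr e, z) \<in> A" and "(z, y) \<in> A\<^sup>*"
    unfolding reach_def by (auto elim: converse_rtranclE)
  moreover from z have "{Inr e, z} \<in> snd (subdivide V E F)"
    using orientation unfolding acyclic_orientation_def by blast
  then obtain u where "u \<in> e" "z = Inl u"
    by (auto simp: snd_subdivide doubleton_eq_iff)
  ultimately show "y \<in> (\<Union>u\<in>e. reach A (Inl u))"
    unfolding reach_def by blast
qed

lemma source_not_in_source_edge: "Inl v \<in> S \<Longrightarrow> Inr e \<in> S \<Longrightarrow> v \<notin> e"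
  using arc_from_source_subdivision_vertex by (auto simp: sources_def)

lemma V_nonempty_if_subdivision_nonempty: "fst (subdivide V E F) \<noteq> {} \<Longrightarrow> V \<noteq> {}"
  using F_subset edge_doubleton by (fastforce simp: fst_subdivide)

lemma source_dominated:
  assumes M: "M \<subseteq> F" "Inr ` M \<subseteq> S"
    and maximal: "\<And>e. e \<in> F \<Longrightarrow> Inr e \<in> S \<Longrightarrow> e \<notin> M \<Longrightarrow> e \<inter> \<Union>M \<noteq> {}"
    and covered: "\<And>u. u \<in> V - \<Union>M \<Longrightarrow> Inl u \<in> reachB A (C1 \<union> C2)"
    and s: "s \<in> S" "s \<notin> Inr ` M \<union> C1 \<union> C2"
  shows "reach A s - {s} \<subseteq> reachB A (Inr ` M \<union> C1) \<or> reach A s - {s} \<subseteq> reachB A (Inr ` M \<union> C2)"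
proof -
  have matched: "Inl u \<in> reachB A (Inr ` M)" if u: "u \<in> \<Union>M" for u
  proof -
    obtain e where "e \<in> M" "u \<in> e" using u by blast
    with M(2) have "(Inr e, Inl u) \<in> A" by (blast intro: arc_from_source_subdivision_vertex)
    with \<open>e \<in> M\<close> show ?thesis unfolding reachB_def reach_def by blast
  qed
  from s(1) consider v where "v \<in> V" "s = Inl v" | e where "e \<in> F" "s = Inr e"
    by (auto simp: sources_def fst_subdivide)
  then show ?thesis
  proof cases
    case (1 v)
    with M(2) s(1) have "v \<notin> \<Union>M" using source_not_in_source_edge by blast
    with 1 have "s \<in> reachB A (C1 \<union> C2)" using covered[of v] by simp
    then have "s \<in> C1 \<union> C2" using source_in_reachB_iff[OF s(1)] by simp
    with s(2) show ?thesis by simp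
  next
    case (2 e)
    with s have "e \<notin> M" by blast
    with 2 s(1) have "e \<inter> \<Union>M \<noteq> {}" using maximal[of e] by simp
    then obtain x where x: "x \<in> e" "x \<in> \<Union>M" by blast
    from 2 F_subset obtain y where "e = {x, y}" "e \<subseteq> V"
      using edge_doubleton[of e] x(1) by blast
    have "\<exists>C\<in>{C1, C2}. \<forall>u\<in>e - \<Union>M. Inl u \<in> reachB A C"
    proof (cases "y \<in> \<Union>M")
      case False
      with \<open>e = {x, y}\<close> \<open>e \<subseteq> V\<close> covered have "Inl y \<in> reachB A C1 \<union> reachB A C2"
        by (auto simp: reachB_Un)
      with \<open>e = {x, y}\<close> x(2) show ?thesis by auto
    qed (use \<open>e = {x, y}\<close> x(2) in auto)
    then obtain C where C: "C = C1 \<or> C = C2" and C_covers: "\<forall>u\<in>e - \<Union>M. Inl u \<in> reachB A C"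
      by blast
    have "reach A (Inl u) \<subseteq> reachB A (Inr ` M \<union> C)" if u: "u \<in> e" for u
    proof (rule reach_subset_reachB)
      show "Inl u \<in> reachB A (Inr ` M \<union> C)"
        using matched[of u] C_covers u by (cases "u \<in> \<Union>M") (auto simp: reachB_Un)
    qed
    then have "(\<Union>u\<in>e. reach A (Inl u)) \<subseteq> reachB A (Inr ` M \<union> C)"
      by (rule UN_least)
    then have "reach A s - {s} \<subseteq> reachB A (Inr ` M \<union> C)"
      unfolding 2(2) using reach_subdivision_vertex[of e] by (rule order_trans[rotated])
    with C show ?thesis by blast
  qed
qed

lemma ex_maximal_source_matching:
  obtains M where "M \<subseteq> F" "Inr ` M \<subseteq> S"
    "\<And>e. e \<in> F \<Longrightarrow> Inr e \<in> S \<Longrightarrow> e \<notin> M \<Longrightarrow> e \<inter> \<Union>M \<noteq> {}"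
    "card V = card (V - \<Union>M) + 2 * card M"
proof -
  obtain M where M: "M \<subseteq> {e \<in> F. Inr e \<in> S}" "pairwise disjnt M"
    and maximal: "\<forall>e\<in>{e \<in> F. Inr e \<in> S} - M. \<exists>e'\<in>M. \<not> disjnt e e'"
    using ex_maximal_pairwise_disjnt_subset[of "{e \<in> F. Inr e \<in> S}"] finite_F by auto
  have doubleton: "e \<subseteq> V \<and> card e = 2" if e: "e \<in> M" for e
  proof -
    obtain u v where "u \<in> V" "v \<in> V" "u \<noteq> v" "e = {u, v}"
      using e M(1) F_subset edge_doubleton by blast
    then show ?thesis by simp
  qed
  then have "\<Union>M \<subseteq> V" by blast
  moreover have "card (\<Union>M) = 2 * card M"
    using M(2) doubleton by (intro card_Union_pairwise_disjnt_doubletons) simp_all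
  ultimately have "card V = card (V - \<Union>M) + 2 * card M"
    using finite_V by (metis card_Diff_subset card_mono finite_subset le_add_diff_inverse2)
  moreover have "e \<inter> \<Union>M \<noteq> {}" if "e \<in> F" "Inr e \<in> S" "e \<notin> M" for e
    using maximal that by (auto simp: disjnt_def)
  ultimately show ?thesis
    using that M(1) by blast
qed

lemma ex_covering_source_halves:
  assumes "U \<subseteq> V"
  obtains C1 C2 where "C1 \<subseteq> S" "C2 \<subseteq> S"
    "card C1 \<le> (card U + 1) div 2" "card C2 \<le> (card U + 1) div 2"
    "\<And>u. u \<in> U \<Longrightarrow> Inl u \<in> reachB A (C1 \<union> C2)"
proof -
  have "\<forall>u\<in>U. \<exists>s. s \<in> S \<and> (s, Inl u) \<in> A\<^sup>*"
    using assms source_reaches by (auto simp: fst_subdivide)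
  then obtain c where c: "\<And>u. u \<in> U \<Longrightarrow> c u \<in> S \<and> (c u, Inl u) \<in> A\<^sup>*"
    by metis
  have "finite U" using assms finite_V finite_subset by blast
  then obtain C1 where C1: "C1 \<subseteq> c ` U" "card C1 \<le> (card (c ` U) + 1) div 2"
    "card (c ` U - C1) \<le> (card (c ` U) + 1) div 2"
    using ex_subset_halves[of "c ` U"] by blast
  have "(card (c ` U) + 1) div 2 \<le> (card U + 1) div 2"
    using card_image_le[OF \<open>finite U\<close>, of c] by (simp add: div_le_mono)
  moreover have "Inl u \<in> reachB A (C1 \<union> (c ` U - C1))" if "u \<in> U" for u
    using c[OF that] that C1(1) unfolding reachB_def reach_def by blast
  moreover have "C1 \<subseteq> S" "c ` U - C1 \<subseteq> S" using c C1(1) by blast+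
  ultimately show ?thesis
    using C1(2,3) by (intro that[of C1 "c ` U - C1"]) auto
qed

lemma dtw_dag_le_half: "dtw_dag (fst (subdivide V E F)) A \<le> (card V + 1) div 2"
proof -
  obtain M where M: "M \<subseteq> F" "Inr ` M \<subseteq> S"
    and maximal: "\<And>e. e \<in> F \<Longrightarrow> Inr e \<in> S \<Longrightarrow> e \<notin> M \<Longrightarrow> e \<inter> \<Union>M \<noteq> {}"
    and card_V: "card V = card (V - \<Union>M) + 2 * card M"
    using ex_maximal_source_matching by metis
  obtain C1 C2 where C: "C1 \<subseteq> S" "C2 \<subseteq> S"
    and card_C: "card C1 \<le> (card (V - \<Union>M) + 1) div 2" "card C2 \<le> (card (V - \<Union>M) + 1) div 2"
    and covered: "\<And>u. u \<in> V - \<Union>M \<Longrightarrow> Inl u \<in> reachB A (C1 \<union> C2)"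
    by (rule ex_covering_source_halves[of "V - \<Union>M"]) blast+
  have card_bound: "card (Inr ` M \<union> C) \<le> (card V + 1) div 2"
    if "card C \<le> (card (V - \<Union>M) + 1) div 2" for C :: "('a + 'a set) set"
  proof -
    have "finite M" using M(1) finite_F by (rule finite_subset)
    then have "card (Inr ` M :: ('a + 'a set) set) \<le> card M" by (rule card_image_le)
    then have "card (Inr ` M \<union> C) \<le> card M + card C"
      using card_Un_le[of "Inr ` M" C] by linarith
    with that card_V show ?thesis by linarith
  qed
  show ?thesis
  proof (rule dtw_dag_le_if_dominating_bags[of _ _ "Inr ` M \<union> C1" "Inr ` M \<union> C2"])
    show "finite S" by (rule finite_S)
    show "Inr ` M \<union> C1 \<subseteq> S" "Inr ` M \<union> C2 \<subseteq> S" using M(2) C by blast+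
    show "card (Inr ` M \<union> C1) \<le> (card V + 1) div 2" "card (Inr ` M \<union> C2) \<le> (card V + 1) div 2"
      using card_bound card_C by blast+
    show "reach A s - {s} \<subseteq> reachB A (Inr ` M \<union> C1) \<or> reach A s - {s} \<subseteq> reachB A (Inr ` M \<union> C2)"
      if "s \<in> S - (Inr ` M \<union> C1 \<union> (Inr ` M \<union> C2))" for s
      using source_dominated[OF M maximal covered] that by blast
    show "1 \<le> (card V + 1) div 2" if "S - (Inr ` M \<union> C1 \<union> (Inr ` M \<union> C2)) \<noteq> {}"
    proof -
      have "V \<noteq> {}" using that V_nonempty_if_subdivision_nonempty by (auto simp: sources_def)
      then show ?thesis using finite_V by (simp add: card_gt_0_iff Suc_le_eq)
    qed
  qed
qed

end

theorem mainTheorem15: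
  fixes V :: "'a set" and E :: "'a set set" and F :: "'a set set" and n :: nat
  assumes "simple_graph V E" and "card V = n" and "F \<subseteq> E"
  shows "dtw_graph (fst (subdivide V E F)) (snd (subdivide V E F)) \<le> nat (ceiling (real n / 2))"
proof -
  let ?V' = "fst (subdivide V E F)" and ?E' = "snd (subdivide V E F)"
  let ?dtws = "{dtw_dag ?V' A | A. acyclic_orientation ?V' ?E' A}"
  have "d \<le> (card V + 1) div 2" if "d \<in> ?dtws" for d
  proof -
    from that obtain A where A: "acyclic_orientation ?V' ?E' A" and d: "d = dtw_dag ?V' A"
      by blast
    interpret subdivision_orientation V E F A
      using assms(1,3) A by unfold_locales
    show ?thesis unfolding d by (rule dtw_dag_le_half)
  qed
  then have "dtw_graph ?V' ?E' \<le> (card V + 1) div 2"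
    unfolding dtw_graph_def by (cases "?dtws = {}") (auto intro: cSup_least)
  with assms(2) show ?thesis by (simp add: nat_ceiling_half)
qed

end
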